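(* Let $(X,f)$ be a dynamical system and $\mathcal{F}$ a Furstenberg family. The following are equivalent: (1) $(X,f)$ is transitive and $\mathcal{F}$-central; (2) $(X,f)$ is $\nabla(\mathcal{F})$-point transitive; (3) $Trans_{\nabla(\mathcal{F})}(X,f)=Trans(X,f)\neq\emptyset$.
   Context: A dynamical system is a pair $(X,f)$ with $X$ a compact metric space and $f:X\to X$ continuous. $\mathbb{N}=\{1,2,\dots\}$. For $U,V\subset X$ and $x\in X$: $N(U,V)=\{n\in\mathbb{N}: U\cap f^{-n}(V)\neq\emptyset\}$ and $N(x,U)=\{n\in\mathbb{N}: f^n(x)\in U\}$. $(X,f)$ is transitive if $N(U,V)\ne\emptyset$ for all non-empty open $U,V$. A point $x$ is a transitive point if its $\omega$-limit set $\omega(x,f)$ equals $X$; $Trans(X,f)$ denotes the set of transitive points. A Furstenberg family is a collection $\mathcal{F}$ of subsets of $\mathbb{N}$ such that $F_1\subset F_2$ and $F_1\in\mathcal{F}$ imply $F_2\in\mathcal{F}$. A point $x$ is an $\mathcal{F}$-transitive point if $N(x,U)\in\mathcal{F}$ for every non-empty open $U\subset X$; $Trans_{\mathcal{F}}(X,f)$ is the set of such points; $(X,f)$ is $\mathcal{F}$-point transitive if this set is non-empty. $(X,f)$ is $\mathcal{F}$-central if $N(U,U)\in\mathcal{F}$ for every non-empty open $U$. For $F\subset\mathbb{N}$, $F-F=\{a-b: a,b\in F,\ a>b\}$, and the reverse difference family is $\nabla(\mathcal{F})=\{F\subset\mathbb{N}: F-F\in\mathcal{F}\}$. *)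

theory Defs
  imports "HOL-Analysis.Analysis"
begin

definition dyn_sys :: "'a::metric_space set \<Rightarrow> ('a \<Rightarrow> 'a) \<Rightarrow> bool" where
  "dyn_sys X f \<longleftrightarrow> compact X \<and> X \<noteq> {} \<and> continuous_on X f \<and> f ` X \<subseteq> X"

definition posnat :: "nat set" where
  "posnat = {n. 1 \<le> n}"

definition hitting_sets :: "('a \<Rightarrow> 'a) \<Rightarrow> 'a set \<Rightarrow> 'a set \<Rightarrow> nat set" where
  "hitting_sets f U V = {n \<in> posnat. U \<inter> ((f ^^ n) -` V) \<noteq> {}}"

definition visit_times :: "('a \<Rightarrow> 'a) \<Rightarrow> 'a \<Rightarrow> 'a set \<Rightarrow> nat set" where
  "visit_times f x U = {n \<in> posnat. (f ^^ n) x \<in> U}"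

definition transitive_sys :: "'a::metric_space set \<Rightarrow> ('a \<Rightarrow> 'a) \<Rightarrow> bool" where
  "transitive_sys X f \<longleftrightarrow>
     (\<forall>U V. openin (top_of_set X) U \<and> U \<noteq> {} \<and> openin (top_of_set X) V \<and> V \<noteq> {}
        \<longrightarrow> hitting_sets f U V \<noteq> {})"

definition omega_limit :: "('a::metric_space \<Rightarrow> 'a) \<Rightarrow> 'a \<Rightarrow> 'a set" where
  "omega_limit f x = {y. \<exists>r. strict_mono r \<and> ((\<lambda>k. (f ^^ r k) x) \<longlonglongrightarrow> y)}"

definition Trans :: "'a::metric_space set \<Rightarrow> ('a \<Rightarrow> 'a) \<Rightarrow> 'a set" where
  "Trans X f = {x \<in> X. omega_limit f x = X}"

definition furstenberg_family :: "nat set set \<Rightarrow> bool" where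
  "furstenberg_family \<F> \<longleftrightarrow> \<F> \<subseteq> Pow posnat \<and>
     (\<forall>A B. A \<subseteq> B \<and> B \<subseteq> posnat \<and> A \<in> \<F> \<longrightarrow> B \<in> \<F>)"

definition Trans_fam :: "nat set set \<Rightarrow> 'a::metric_space set \<Rightarrow> ('a \<Rightarrow> 'a) \<Rightarrow> 'a set" where
  "Trans_fam \<F> X f = {x \<in> X. \<forall>U. openin (top_of_set X) U \<and> U \<noteq> {}
        \<longrightarrow> visit_times f x U \<in> \<F>}"

definition fam_point_transitive :: "nat set set \<Rightarrow> 'a::metric_space set \<Rightarrow> ('a \<Rightarrow> 'a) \<Rightarrow> bool" where
  "fam_point_transitive \<F> X f \<longleftrightarrow> Trans_fam \<F> X f \<noteq> {}"

definition fam_central :: "nat set set \<Rightarrow> 'a::metric_space set \<Rightarrow> ('a \<Rightarrow> 'a) \<Rightarrow> bool" where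
  "fam_central \<F> X f \<longleftrightarrow>
     (\<forall>U. openin (top_of_set X) U \<and> U \<noteq> {} \<longrightarrow> hitting_sets f U U \<in> \<F>)"

definition diff_set :: "nat set \<Rightarrow> nat set" where
  "diff_set F = {a - b | a b. a \<in> F \<and> b \<in> F \<and> a > b}"

definition rev_diff :: "nat set set \<Rightarrow> nat set set" where
  "rev_diff \<F> = {F. F \<subseteq> posnat \<and> diff_set F \<in> \<F>}"

end

theory Submission
  imports Defs
begin

text \<open>For a transitive point \<open>x\<close> the return times \<open>N(U,U)\<close> are exactly the differences of
  visit times \<open>N(x,U) - N(x,U)\<close>: a visit to \<open>U \<inter> (f ^^ n) -` U\<close> followed by the visit \<open>n\<close> steps
  later exhibits \<open>n\<close> as such a difference, and conversely. So \<open>\<F>\<close>-centrality turns every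
  transitive point into a \<open>\<nabla>(\<F>)\<close>-transitive point and a \<open>\<nabla>(\<F>)\<close>-transitive point forces
  \<open>\<F>\<close>-centrality. As \<open>{} \<notin> \<F>\<close>, a \<open>\<nabla>(\<F>)\<close>-transitive point visits every nonempty open
  set at least twice, hence infinitely often (discarding an initial orbit segment, or using
  periodicity at an isolated point), so it is transitive. Finally, a transitive compact
  system has a transitive point by the Baire category theorem.\<close>

lemma funpow_in_dyn_sys:
  assumes "dyn_sys X f" "x \<in> X"
  shows "(f ^^ n) x \<in> X"
  using assms by (induction n) (auto simp: dyn_sys_def)

lemma continuous_on_funpow:
  assumes "continuous_on X f" "f ` X \<subseteq> X"
  shows "continuous_on X (f ^^ n)"
proof (induction n)
  case (Suc n)
  have "(f ^^ n) ` X \<subseteq> X"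
    using assms(2) by (induction n) auto
  then have "continuous_on X (f \<circ> (f ^^ n))"
    using Suc assms(1) by (intro continuous_on_compose) (auto intro: continuous_on_subset)
  then show ?case by (simp add: comp_def)
qed (simp add: continuous_on_id)

lemma openin_funpow_preimage:
  assumes "dyn_sys X f" "openin (top_of_set X) U"
  shows "openin (top_of_set X) (X \<inter> (f ^^ n) -` U)"
  using assms funpow_in_dyn_sys[OF assms(1)]
  by (intro continuous_openin_preimage[OF continuous_on_funpow])
     (auto simp: dyn_sys_def)

lemma funpow_diff_apply:
  fixes f :: "'a \<Rightarrow> 'a"
  assumes "b \<le> a"
  shows "(f ^^ (a - b)) ((f ^^ b) x) = (f ^^ a) x"
  using assms by (metis funpow_add comp_apply le_add_diff_inverse2)

lemma funpow_eventually_periodic: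
  fixes f :: "'a \<Rightarrow> 'a"
  assumes "(f ^^ a) x = (f ^^ b) x" "b \<le> a"
  shows "(f ^^ (k * (a - b) + b)) x = (f ^^ b) x"
proof (induction k)
  case (Suc k)
  have "Suc k * (a - b) + b = k * (a - b) + a"
    using assms(2) by simp
  then have "(f ^^ (Suc k * (a - b) + b)) x = (f ^^ (k * (a - b))) ((f ^^ a) x)"
    by (simp only: funpow_add comp_apply)
  also have "\<dots> = (f ^^ (k * (a - b) + b)) x"
    using assms(1) by (simp add: funpow_add)
  finally show ?case using Suc by simp
qed simp

lemma subseq_tendsto_iff_frequently:
  fixes s :: "nat \<Rightarrow> 'a::first_countable_topology"
  shows "(\<exists>r. strict_mono r \<and> (\<lambda>k. s (r k)) \<longlonglongrightarrow> y) \<longleftrightarrow>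
         (\<forall>U. open U \<longrightarrow> y \<in> U \<longrightarrow> (\<exists>\<^sub>F n in sequentially. s n \<in> U))"
proof safe
  fix r U assume r: "strict_mono r" "(\<lambda>k. s (r k)) \<longlonglongrightarrow> y" and "open U" "y \<in> U"
  then obtain K where K: "\<And>k. k \<ge> K \<Longrightarrow> s (r k) \<in> U"
    by (metis topological_tendstoD eventually_sequentially)
  show "\<exists>\<^sub>F n in sequentially. s n \<in> U"
    unfolding frequently_sequentially
    using K r(1) seq_suble by (metis max.cobounded1 max.cobounded2 order.trans)
next
  assume freq: "\<forall>U. open U \<longrightarrow> y \<in> U \<longrightarrow> (\<exists>\<^sub>F n in sequentially. s n \<in> U)"
  obtain A :: "nat \<Rightarrow> 'a set" where A: "\<And>i. open (A i)" "\<And>i. y \<in> A i"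
    "\<And>S. open S \<Longrightarrow> y \<in> S \<Longrightarrow> eventually (\<lambda>i. A i \<subseteq> S) sequentially"
    using countable_basis_at_decseq by blast
  have "\<forall>i m. \<exists>j>m. s j \<in> A i"
    using freq A(1,2) unfolding frequently_sequentially by (metis Suc_le_eq)
  then obtain c where c: "\<And>i m. c i m > m \<and> s (c i m) \<in> A i"
    by metis
  define r where "r = rec_nat (c 0 0) (\<lambda>i. c (Suc i))"
  have r: "s (r i) \<in> A i" for i
    by (cases i) (simp_all add: r_def c)
  have "strict_mono r"
    by (simp add: strict_mono_Suc_iff r_def c)
  moreover have "(\<lambda>k. s (r k)) \<longlonglongrightarrow> y"
  proof (rule topological_tendstoI)
    fix S assume "open S" "y \<in> S"
    with A(3) have "eventually (\<lambda>i. A i \<subseteq> S) sequentially" by blast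
    then show "eventually (\<lambda>i. s (r i) \<in> S) sequentially"
      by (rule eventually_mono) (use r in blast)
  qed
  ultimately show "\<exists>r. strict_mono r \<and> (\<lambda>k. s (r k)) \<longlonglongrightarrow> y" by blast
qed

lemma omega_limit_iff_frequently:
  "y \<in> omega_limit f x \<longleftrightarrow> (\<forall>U. open U \<longrightarrow> y \<in> U \<longrightarrow> (\<exists>\<^sub>F n in sequentially. (f ^^ n) x \<in> U))"
  unfolding omega_limit_def using subseq_tendsto_iff_frequently[of "\<lambda>n. (f ^^ n) x" y] by simp

lemma omega_limit_subset_closed:
  assumes "closed S" "\<And>n. (f ^^ n) x \<in> S"
  shows "omega_limit f x \<subseteq> S"
proof
  fix y assume "y \<in> omega_limit f x"
  show "y \<in> S"
  proof (rule ccontr)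
    assume "y \<notin> S"
    then have "\<exists>\<^sub>F n in sequentially. (f ^^ n) x \<in> - S"
      using \<open>y \<in> omega_limit f x\<close> \<open>closed S\<close> omega_limit_iff_frequently by blast
    then show False
      using assms(2) by (simp add: frequently_def)
  qed
qed

lemma Trans_iff_frequent_visits:
  assumes "dyn_sys X f"
  shows "x \<in> Trans X f \<longleftrightarrow> x \<in> X \<and>
     (\<forall>U. openin (top_of_set X) U \<and> U \<noteq> {} \<longrightarrow> (\<exists>\<^sub>F n in sequentially. (f ^^ n) x \<in> U))"
proof (cases "x \<in> X")
  case True
  then have orbit: "\<And>n. (f ^^ n) x \<in> X"
    using funpow_in_dyn_sys[OF assms] by simp
  have "omega_limit f x = X \<longleftrightarrow>
     (\<forall>U. openin (top_of_set X) U \<and> U \<noteq> {} \<longrightarrow> (\<exists>\<^sub>F n in sequentially. (f ^^ n) x \<in> U))"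
  proof
    assume omega: "omega_limit f x = X"
    show "\<forall>U. openin (top_of_set X) U \<and> U \<noteq> {} \<longrightarrow> (\<exists>\<^sub>F n in sequentially. (f ^^ n) x \<in> U)"
    proof (intro allI impI)
      fix U assume "openin (top_of_set X) U \<and> U \<noteq> {}"
      then obtain y T where "y \<in> U" "open T" "U = T \<inter> X"
        by (auto simp: openin_open)
      then have "\<exists>\<^sub>F n in sequentially. (f ^^ n) x \<in> T"
        using omega omega_limit_iff_frequently by blast
      then show "\<exists>\<^sub>F n in sequentially. (f ^^ n) x \<in> U"
        using orbit \<open>U = T \<inter> X\<close> by (auto elim: frequently_elim1)
    qed
  next
    assume visits: "\<forall>U. openin (top_of_set X) U \<and> U \<noteq> {} \<longrightarrow> (\<exists>\<^sub>F n in sequentially. (f ^^ n) x \<in> U)"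
    have "y \<in> omega_limit f x" if "y \<in> X" for y
      unfolding omega_limit_iff_frequently
    proof (intro allI impI)
      fix T assume "open T" "y \<in> T"
      then have "\<exists>\<^sub>F n in sequentially. (f ^^ n) x \<in> X \<inter> T"
        using visits \<open>y \<in> X\<close> by (metis Int_iff empty_iff openin_open_Int)
      then show "\<exists>\<^sub>F n in sequentially. (f ^^ n) x \<in> T"
        by (rule frequently_elim1) simp
    qed
    moreover have "closed X"
      using assms compact_imp_closed by (auto simp: dyn_sys_def)
    ultimately show "omega_limit f x = X"
      using omega_limit_subset_closed[of X f x] orbit by blast
  qed
  then show ?thesis using True by (simp add: Trans_def)
qed (simp add: Trans_def)

lemma transitive_sys_if_Trans:
  assumes "dyn_sys X f" "x \<in> Trans X f"
  shows "transitive_sys X f"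
  unfolding transitive_sys_def
proof (intro allI impI)
  fix U V assume UV: "openin (top_of_set X) U \<and> U \<noteq> {} \<and> openin (top_of_set X) V \<and> V \<noteq> {}"
  have visits: "\<forall>N. \<exists>n\<ge>N. (f ^^ n) x \<in> W" if "openin (top_of_set X) W" "W \<noteq> {}" for W
    using assms(2) that Trans_iff_frequent_visits[OF assms(1)] unfolding frequently_sequentially by blast
  obtain b where b: "b \<ge> 1" "(f ^^ b) x \<in> U"
    using visits[of U] UV by blast
  obtain a where a: "a \<ge> Suc b" "(f ^^ a) x \<in> V"
    using visits[of V] UV by blast
  then have "(f ^^ b) x \<in> U \<inter> (f ^^ (a - b)) -` V"
    using b(2) funpow_diff_apply[of b a f x] by simp
  then have "a - b \<in> hitting_sets f U V"
    using a(1) by (auto simp: hitting_sets_def posnat_def)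
  then show "hitting_sets f U V \<noteq> {}" by blast
qed

lemma compact_countable_pi_base:
  fixes X :: "'a::metric_space set"
  assumes "compact X"
  obtains \<B> where "countable \<B>" "\<And>V. V \<in> \<B> \<Longrightarrow> openin (top_of_set X) V \<and> V \<noteq> {}"
    "\<And>U. openin (top_of_set X) U \<Longrightarrow> U \<noteq> {} \<Longrightarrow> \<exists>V\<in>\<B>. V \<subseteq> U"
proof -
  have "\<forall>k::nat. \<exists>N. finite N \<and> X \<subseteq> (\<Union>d\<in>N. ball d (1 / real (Suc k)))"
    using assms by (simp add: compact_eq_totally_bounded)
  then obtain N where N: "\<And>k. finite (N k)" "\<And>k. X \<subseteq> (\<Union>d\<in>N k. ball d (1 / real (Suc k)))"
    by metis
  define \<B> where "\<B> = {X \<inter> ball d (1 / real (Suc k)) | d k. d \<in> N k} - {{}}"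
  have "\<B> \<subseteq> (\<lambda>(k, d). X \<inter> ball d (1 / real (Suc k))) ` (SIGMA k:UNIV. N k)"
    by (auto simp: \<B>_def)
  then have "countable \<B>"
    by (rule countable_subset) (auto intro: countable_finite N(1))
  moreover have "\<exists>V\<in>\<B>. V \<subseteq> U" if U: "openin (top_of_set X) U" "U \<noteq> {}" for U
  proof -
    obtain y where y: "y \<in> U"
      using U(2) by blast
    then obtain e where e: "e > 0" "ball y e \<inter> X \<subseteq> U"
      using U(1) openin_contains_ball by metis
    obtain k :: nat where k: "1 / real (Suc k) < e / 2"
      using e(1) half_gt_zero nat_approx_posE by blast
    have "y \<in> X" using U y openin_imp_subset by blast
    then obtain d where d: "d \<in> N k" "y \<in> ball d (1 / real (Suc k))"
      using N(2) by blast
    have "ball d (1 / real (Suc k)) \<subseteq> ball y e"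
    proof
      fix z assume "z \<in> ball d (1 / real (Suc k))"
      then have "dist d y < e / 2" "dist d z < e / 2"
        using d(2) k by auto
      then show "z \<in> ball y e"
        by (simp add: dist_triangle_half_r)
    qed
    moreover have "X \<inter> ball d (1 / real (Suc k)) \<in> \<B>"
      using d \<open>y \<in> X\<close> by (auto simp: \<B>_def)
    ultimately show ?thesis using e(2) by blast
  qed
  moreover have "openin (top_of_set X) V \<and> V \<noteq> {}" if "V \<in> \<B>" for V
    using that by (auto simp: \<B>_def openin_open_Int)
  ultimately show ?thesis
    using that by blast
qed

lemma transitive_hitting_times_unbounded:
  assumes "dyn_sys X f" "transitive_sys X f"
    and "openin (top_of_set X) U" "U \<noteq> {}" "openin (top_of_set X) V" "V \<noteq> {}"
  shows "\<exists>n>m. U \<inter> (f ^^ n) -` V \<noteq> {}"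
  using assms(5,6)
proof (induction m arbitrary: V)
  case 0
  then have "hitting_sets f U V \<noteq> {}"
    using assms(2,3,4) unfolding transitive_sys_def by blast
  then show ?case
    unfolding hitting_sets_def posnat_def by (auto intro: Suc_le_lessD)
next
  case (Suc m)
  then have "hitting_sets f V V \<noteq> {}"
    using assms(2) unfolding transitive_sys_def by blast
  then obtain j where j: "j \<ge> 1" "V \<inter> (f ^^ j) -` V \<noteq> {}"
    unfolding hitting_sets_def posnat_def by auto
  define V' where "V' = V \<inter> (X \<inter> (f ^^ j) -` V)"
  have "openin (top_of_set X) V'"
    unfolding V'_def using Suc.prems openin_funpow_preimage[OF assms(1)] by blast
  moreover have "V' \<noteq> {}"
    using j openin_imp_subset[OF Suc.prems(1)] unfolding V'_def by blast
  ultimately obtain n z where "n > m" "z \<in> U" "(f ^^ n) z \<in> V'"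
    using Suc.IH by blast
  moreover have "(f ^^ (j + n)) z = (f ^^ j) ((f ^^ n) z)"
    by (simp add: funpow_add)
  ultimately show ?case
    using j unfolding V'_def by (intro exI[of _ "j + n"]) auto
qed

lemma late_visitors_dense_openin:
  assumes "dyn_sys X f" "transitive_sys X f" "openin (top_of_set X) V" "V \<noteq> {}"
  shows "openin (top_of_set X) {z \<in> X. \<exists>n>m. (f ^^ n) z \<in> V}"
    and "(top_of_set X) closure_of {z \<in> X. \<exists>n>m. (f ^^ n) z \<in> V} = X"
proof -
  have "openin (top_of_set X) (\<Union>n\<in>{m<..}. X \<inter> (f ^^ n) -` V)"
    using openin_funpow_preimage[OF assms(1,3)] by (intro openin_Union) auto
  moreover have "(\<Union>n\<in>{m<..}. X \<inter> (f ^^ n) -` V) = {z \<in> X. \<exists>n>m. (f ^^ n) z \<in> V}"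
    by auto
  ultimately show "openin (top_of_set X) {z \<in> X. \<exists>n>m. (f ^^ n) z \<in> V}"
    by simp
  have "{z \<in> X. \<exists>n>m. (f ^^ n) z \<in> V} \<inter> W \<noteq> {}"
    if W: "openin (top_of_set X) W" "W \<noteq> {}" for W
  proof -
    obtain n z where "n > m" "z \<in> W" "(f ^^ n) z \<in> V"
      using transitive_hitting_times_unbounded[OF assms(1,2) W assms(3,4)] by blast
    moreover have "z \<in> X"
      using openin_imp_subset[OF W(1)] \<open>z \<in> W\<close> by blast
    ultimately show ?thesis by blast
  qed
  then have "(top_of_set X) closure_of {z \<in> X. \<exists>n>m. (f ^^ n) z \<in> V} = topspace (top_of_set X)"
    unfolding dense_intersects_open by blast
  then show "(top_of_set X) closure_of {z \<in> X. \<exists>n>m. (f ^^ n) z \<in> V} = X"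
    by simp
qed

lemma compact_Baire_common_point:
  fixes X :: "'a::metric_space set"
  assumes "compact X" "X \<noteq> {}" "countable \<G>"
    and "\<And>T. T \<in> \<G> \<Longrightarrow> openin (top_of_set X) T \<and> (top_of_set X) closure_of T = X"
  obtains x where "x \<in> X" "\<And>T. T \<in> \<G> \<Longrightarrow> x \<in> T"
proof -
  have "locally_compact_space (top_of_set X) \<and> regular_space (top_of_set X)"
    using compact_imp_locally_compact_space[OF compact_space_subtopology[of euclidean X]]
      regular_space_subtopology[OF regular_space_euclidean] \<open>compact X\<close> by simp
  then have "(top_of_set X) closure_of \<Inter>\<G> = topspace (top_of_set X)"
    using assms(3,4) by (intro Baire_category) auto
  then have "\<Inter>\<G> \<inter> X \<noteq> {}"
    unfolding dense_intersects_open using \<open>X \<noteq> {}\<close>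
    by (metis openin_topspace topspace_euclidean_subtopology)
  then show ?thesis
    using that by blast
qed

lemma Trans_nonempty_if_transitive:
  assumes "dyn_sys X f" "transitive_sys X f"
  shows "Trans X f \<noteq> {}"
proof -
  have "compact X" "X \<noteq> {}"
    using assms(1) by (auto simp: dyn_sys_def)
  obtain \<B> where \<B>: "countable \<B>" "\<And>V. V \<in> \<B> \<Longrightarrow> openin (top_of_set X) V \<and> V \<noteq> {}"
    "\<And>U. openin (top_of_set X) U \<Longrightarrow> U \<noteq> {} \<Longrightarrow> \<exists>V\<in>\<B>. V \<subseteq> U"
    using compact_countable_pi_base[OF \<open>compact X\<close>] by blast
  define \<G> where "\<G> = (\<lambda>(V, m). {z \<in> X. \<exists>n>m. (f ^^ n) z \<in> V}) ` (\<B> \<times> UNIV)"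
  have "countable \<G>"
    using \<B>(1) by (simp add: \<G>_def)
  moreover have "openin (top_of_set X) T \<and> (top_of_set X) closure_of T = X" if "T \<in> \<G>" for T
  proof -
    obtain V m where "V \<in> \<B>" "T = {z \<in> X. \<exists>n>m. (f ^^ n) z \<in> V}"
      using \<open>T \<in> \<G>\<close> unfolding \<G>_def by auto
    then show ?thesis
      using late_visitors_dense_openin[OF assms, of V m] \<B>(2) by simp
  qed
  ultimately obtain x where x: "x \<in> X" "\<And>T. T \<in> \<G> \<Longrightarrow> x \<in> T"
    using compact_Baire_common_point[OF \<open>compact X\<close> \<open>X \<noteq> {}\<close>] by blast
  have "\<exists>\<^sub>F n in sequentially. (f ^^ n) x \<in> U"
    if U: "openin (top_of_set X) U" "U \<noteq> {}" for U
    unfolding frequently_sequentially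
  proof
    fix m
    obtain V where "V \<in> \<B>" "V \<subseteq> U"
      using \<B>(3) U by blast
    then have "{z \<in> X. \<exists>n>m. (f ^^ n) z \<in> V} \<in> \<G>"
      unfolding \<G>_def by (intro image_eqI[where x="(V, m)"]) auto
    then have "x \<in> {z \<in> X. \<exists>n>m. (f ^^ n) z \<in> V}"
      using x(2) by blast
    then show "\<exists>n\<ge>m. (f ^^ n) x \<in> U"
      using \<open>V \<subseteq> U\<close> by (auto intro: less_imp_le)
  qed
  then show ?thesis
    using Trans_iff_frequent_visits[OF assms(1)] x(1) by blast
qed

lemma furstenberg_family_upward:
  assumes "furstenberg_family \<F>" "A \<in> \<F>" "A \<subseteq> B" "B \<subseteq> posnat"
  shows "B \<in> \<F>"
  using assms unfolding furstenberg_family_def by blast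

lemma diff_set_visit_times_subset_hitting_sets:
  "diff_set (visit_times f x U) \<subseteq> hitting_sets f U U"
proof
  fix n assume "n \<in> diff_set (visit_times f x U)"
  then obtain a b where ab: "n = a - b" "b < a" "(f ^^ a) x \<in> U" "(f ^^ b) x \<in> U"
    unfolding diff_set_def visit_times_def by blast
  then have "(f ^^ b) x \<in> U \<inter> (f ^^ n) -` U"
    using funpow_diff_apply[of b a f x] by simp
  then show "n \<in> hitting_sets f U U"
    using ab(1,2) by (auto simp: hitting_sets_def posnat_def)
qed

lemma hitting_sets_subset_diff_set_visit_times:
  assumes "dyn_sys X f" "x \<in> Trans X f" "openin (top_of_set X) U"
  shows "hitting_sets f U U \<subseteq> diff_set (visit_times f x U)"
proof
  fix n assume "n \<in> hitting_sets f U U"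
  then have "n \<ge> 1" and "U \<inter> (f ^^ n) -` U \<noteq> {}"
    unfolding hitting_sets_def posnat_def by auto
  define W where "W = U \<inter> (X \<inter> (f ^^ n) -` U)"
  have "openin (top_of_set X) W"
    unfolding W_def using assms(3) openin_funpow_preimage[OF assms(1)] by blast
  moreover have "W \<noteq> {}"
    using \<open>U \<inter> (f ^^ n) -` U \<noteq> {}\<close> openin_imp_subset[OF assms(3)] unfolding W_def by blast
  ultimately have "\<exists>\<^sub>F k in sequentially. (f ^^ k) x \<in> W"
    using assms(2) Trans_iff_frequent_visits[OF assms(1)] by blast
  then obtain b where b: "b \<ge> 1" "(f ^^ b) x \<in> W"
    unfolding frequently_sequentially by blast
  have "(f ^^ (n + b)) x = (f ^^ n) ((f ^^ b) x)"
    by (simp add: funpow_add)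
  then have "(f ^^ (n + b)) x \<in> U" "(f ^^ b) x \<in> U"
    using b(2) unfolding W_def by auto
  then show "n \<in> diff_set (visit_times f x U)"
    unfolding diff_set_def visit_times_def posnat_def using b(1) \<open>n \<ge> 1\<close>
    by (intro CollectI exI[of _ "n + b"] exI[of _ b]) auto
qed

lemma Trans_subset_Trans_fam_rev_diff:
  assumes "dyn_sys X f" "furstenberg_family \<F>" "fam_central \<F> X f"
  shows "Trans X f \<subseteq> Trans_fam (rev_diff \<F>) X f"
proof
  fix x assume x: "x \<in> Trans X f"
  have "visit_times f x U \<in> rev_diff \<F>" if U: "openin (top_of_set X) U" "U \<noteq> {}" for U
  proof -
    have "hitting_sets f U U \<in> \<F>"
      using assms(3) U unfolding fam_central_def by blast
    moreover have "diff_set (visit_times f x U) \<subseteq> posnat"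
      unfolding diff_set_def posnat_def by auto
    ultimately have "diff_set (visit_times f x U) \<in> \<F>"
      using furstenberg_family_upward[OF assms(2)]
        hitting_sets_subset_diff_set_visit_times[OF assms(1) x U(1)] by blast
    moreover have "visit_times f x U \<subseteq> posnat"
      unfolding visit_times_def by blast
    ultimately show ?thesis
      unfolding rev_diff_def by blast
  qed
  moreover have "x \<in> X"
    using x by (simp add: Trans_def)
  ultimately show "x \<in> Trans_fam (rev_diff \<F>) X f"
    unfolding Trans_fam_def by blast
qed

lemma fam_central_if_Trans_fam_rev_diff:
  assumes "furstenberg_family \<F>" "x \<in> Trans_fam (rev_diff \<F>) X f"
  shows "fam_central \<F> X f"
  unfolding fam_central_def
proof (intro allI impI)
  fix U assume "openin (top_of_set X) U \<and> U \<noteq> {}"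
  then have "visit_times f x U \<in> rev_diff \<F>"
    using assms(2) unfolding Trans_fam_def by blast
  then have "diff_set (visit_times f x U) \<in> \<F>"
    unfolding rev_diff_def by blast
  moreover have "hitting_sets f U U \<subseteq> posnat"
    unfolding hitting_sets_def by blast
  ultimately show "hitting_sets f U U \<in> \<F>"
    by (rule furstenberg_family_upward[OF assms(1) _ diff_set_visit_times_subset_hitting_sets])
qed

lemma openin_singleton_if_finite:
  fixes U :: "'a::t1_space set"
  assumes "openin (top_of_set X) U" "finite U" "p \<in> U"
  shows "openin (top_of_set X) {p}"
proof -
  have "closed (U - {p})"
    using assms(2) by (simp add: finite_imp_closed)
  then have "openin (top_of_set X) (U \<inter> - (U - {p}))"
    by (intro openin_Int_open[OF assms(1)] open_Compl)
  moreover have "U \<inter> - (U - {p}) = {p}"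
    using assms(3) by blast
  ultimately show ?thesis by simp
qed

text \<open>Either \<open>U\<close> is not covered by the first \<open>N\<close> orbit points, and a visit to the uncovered
  part comes after time \<open>N\<close>, or \<open>U\<close> is finite and hence contains an isolated point, whose
  two visits make the orbit periodic through it.\<close>
lemma frequent_visits_if_returns:
  fixes X :: "'a::t1_space set"
  assumes returns: "\<And>V. openin (top_of_set X) V \<Longrightarrow> V \<noteq> {} \<Longrightarrow> diff_set (visit_times f x V) \<noteq> {}"
    and U: "openin (top_of_set X) U" "U \<noteq> {}"
  shows "\<exists>\<^sub>F n in sequentially. (f ^^ n) x \<in> U"
  unfolding frequently_sequentially
proof
  fix N
  define Init where "Init = (\<lambda>j. (f ^^ j) x) ` {..<N}"
  have "closed Init"
    unfolding Init_def by (simp add: finite_imp_closed)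
  show "\<exists>n\<ge>N. (f ^^ n) x \<in> U"
  proof (cases "U - Init = {}")
    case False
    have "openin (top_of_set X) (U - Init)"
      using openin_Int_open[OF U(1), of "- Init"] \<open>closed Init\<close> by (simp add: Diff_eq open_Compl)
    then obtain b where b: "(f ^^ b) x \<in> U" "(f ^^ b) x \<notin> Init"
      using returns[OF _ False] unfolding diff_set_def visit_times_def by blast
    then have "b \<ge> N"
      unfolding Init_def by (meson image_eqI lessThan_iff not_le)
    then show ?thesis
      using b(1) by blast
  next
    case True
    then have "finite U"
      using finite_subset[of U Init] unfolding Init_def by blast
    obtain p where "p \<in> U"
      using U(2) by blast
    then have "openin (top_of_set X) {p}"
      using openin_singleton_if_finite[OF U(1) \<open>finite U\<close>] by blast
    then obtain a b where "b < a" "(f ^^ a) x = p" "(f ^^ b) x = p"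
      using returns[of "{p}"] unfolding diff_set_def visit_times_def by blast
    then have "(f ^^ (N * (a - b) + b)) x = p"
      by (metis funpow_eventually_periodic less_imp_le)
    moreover have "N \<le> N * (a - b) + b"
      using \<open>b < a\<close> by (metis mult_le_mono2 mult_1_right trans_le_add1 Suc_leI zero_less_diff One_nat_def)
    ultimately show ?thesis
      using \<open>p \<in> U\<close> by blast
  qed
qed

lemma Trans_fam_rev_diff_subset_Trans:
  assumes "dyn_sys X f" "{} \<notin> \<F>"
  shows "Trans_fam (rev_diff \<F>) X f \<subseteq> Trans X f"
proof
  fix x assume x: "x \<in> Trans_fam (rev_diff \<F>) X f"
  have "diff_set (visit_times f x V) \<noteq> {}" if "openin (top_of_set X) V" "V \<noteq> {}" for V
  proof -
    have "visit_times f x V \<in> rev_diff \<F>"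
      using x that unfolding Trans_fam_def by blast
    then show ?thesis
      using assms(2) unfolding rev_diff_def by auto
  qed
  then have "\<exists>\<^sub>F n in sequentially. (f ^^ n) x \<in> U"
    if "openin (top_of_set X) U" "U \<noteq> {}" for U
    using frequent_visits_if_returns that by blast
  moreover have "x \<in> X"
    using x unfolding Trans_fam_def by blast
  ultimately show "x \<in> Trans X f"
    using Trans_iff_frequent_visits[OF assms(1)] by blast
qed

theorem proposition3p5:
  fixes X :: "'a::metric_space set" and f :: "'a \<Rightarrow> 'a" and \<F> :: "nat set set"
  assumes "dyn_sys X f"
    and "furstenberg_family \<F>"
    and "{} \<notin> \<F>"
  shows "((transitive_sys X f \<and> fam_central \<F> X f) \<longleftrightarrow> fam_point_transitive (rev_diff \<F>) X f)
       \<and> (fam_point_transitive (rev_diff \<F>) X f \<longleftrightarrow>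
            (Trans_fam (rev_diff \<F>) X f = Trans X f \<and> Trans X f \<noteq> {}))"
proof -
  have Trans_eq: "Trans_fam (rev_diff \<F>) X f = Trans X f" if "fam_central \<F> X f"
    using Trans_subset_Trans_fam_rev_diff[OF assms(1,2) that]
      Trans_fam_rev_diff_subset_Trans[OF assms(1,3)] by blast
  have "Trans_fam (rev_diff \<F>) X f = Trans X f \<and> Trans X f \<noteq> {}"
    if "transitive_sys X f" "fam_central \<F> X f"
    using Trans_eq Trans_nonempty_if_transitive[OF assms(1)] that by blast
  moreover have "transitive_sys X f \<and> fam_central \<F> X f"
    if "x \<in> Trans_fam (rev_diff \<F>) X f" for x
    using that transitive_sys_if_Trans[OF assms(1)] fam_central_if_Trans_fam_rev_diff[OF assms(2)]
      Trans_fam_rev_diff_subset_Trans[OF assms(1,3)] by blast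
  ultimately show ?thesis
    unfolding fam_point_transitive_def by blast
qed

end
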